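(* Let $X$ be a graph with signless Laplacian $Q=\sum_{\lambda}\lambda E_\lambda$ and let $A_{\mathcal L}=\sum_\theta\theta F_\theta$ be the adjacency matrix of its line graph (spectral decompositions with orthogonal projections). Let $\{a,b\},\{\alpha,\beta\}\in E(X)$. For every eigenvalue $\lambda\neq0$ of $Q$, $\lambda-2$ is an eigenvalue of $A_{\mathcal L}$, and for each fixed sign $\pm$, $$F_{\lambda-2}\mathbf f_{ab}=\pm F_{\lambda-2}\mathbf f_{\alpha\beta}\iff E_\lambda(\mathbf e_a+\mathbf e_b)=\pm E_\lambda(\mathbf e_\alpha+\mathbf e_\beta).$$
   Context: The line graph $\mathcal L(X)$ has vertex set $E(X)$ with edges adjacent iff they share an endpoint; $\mathbf f_{ab}$ is the standard basis vector of the vertex of $\mathcal L(X)$ corresponding to edge $\{a,b\}$. $Q=D+A$. *)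

theory Defs
  imports Complex_Main
begin

definition simple_graph :: "'v set \<Rightarrow> 'v set set \<Rightarrow> bool" where
  "simple_graph V Ed \<longleftrightarrow> finite V \<and> (\<forall>e\<in>Ed. \<exists>x y. x \<in> V \<and> y \<in> V \<and> x \<noteq> y \<and> e = {x, y})"

definition vecs_on :: "'a set \<Rightarrow> ('a \<Rightarrow> real) set" where
  "vecs_on S = {f. \<forall>x. x \<notin> S \<longrightarrow> f x = 0}"

definition inner_on :: "'a set \<Rightarrow> ('a \<Rightarrow> real) \<Rightarrow> ('a \<Rightarrow> real) \<Rightarrow> real" where
  "inner_on S f g = (\<Sum>x\<in>S. f x * g x)"

definition mat_vec :: "'a set \<Rightarrow> ('a \<Rightarrow> 'a \<Rightarrow> real) \<Rightarrow> ('a \<Rightarrow> real) \<Rightarrow> ('a \<Rightarrow> real)" where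
  "mat_vec S M f = (\<lambda>i. if i \<in> S then (\<Sum>j\<in>S. M i j * f j) else 0)"

definition eigenspace_on :: "'a set \<Rightarrow> ('a \<Rightarrow> 'a \<Rightarrow> real) \<Rightarrow> real \<Rightarrow> ('a \<Rightarrow> real) set" where
  "eigenspace_on S M \<theta> = {f \<in> vecs_on S. mat_vec S M f = (\<lambda>i. \<theta> * f i)}"

definition is_eigenvalue_on :: "'a set \<Rightarrow> ('a \<Rightarrow> 'a \<Rightarrow> real) \<Rightarrow> real \<Rightarrow> bool" where
  "is_eigenvalue_on S M \<theta> \<longleftrightarrow> (\<exists>f \<in> eigenspace_on S M \<theta>. f \<noteq> (\<lambda>_. 0))"

definition orth_proj :: "'a set \<Rightarrow> ('a \<Rightarrow> real) set \<Rightarrow> ('a \<Rightarrow> real) \<Rightarrow> ('a \<Rightarrow> real)" where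
  "orth_proj S W v = (THE w. w \<in> W \<and> (\<forall>u\<in>W. inner_on S (\<lambda>i. v i - w i) u = 0))"

definition spectral_proj :: "'a set \<Rightarrow> ('a \<Rightarrow> 'a \<Rightarrow> real) \<Rightarrow> real \<Rightarrow> ('a \<Rightarrow> real) \<Rightarrow> ('a \<Rightarrow> real)" where
  "spectral_proj S M \<theta> = orth_proj S (eigenspace_on S M \<theta>)"

definition degree :: "'v set set \<Rightarrow> 'v \<Rightarrow> nat" where
  "degree Ed x = card {e \<in> Ed. x \<in> e}"

definition signless_laplacian :: "'v set set \<Rightarrow> 'v \<Rightarrow> 'v \<Rightarrow> real" where
  "signless_laplacian Ed i j =
     (if i = j then real (degree Ed i) else if {i, j} \<in> Ed then 1 else 0)"

definition line_adj :: "'v set set \<Rightarrow> 'v set \<Rightarrow> 'v set \<Rightarrow> real" where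
  "line_adj Ed e f = (if e \<noteq> f \<and> e \<inter> f \<noteq> {} then 1 else 0)"

definition std_basis :: "'a \<Rightarrow> 'a \<Rightarrow> real" where
  "std_basis x = (\<lambda>i. if i = x then 1 else 0)"

end

theory Submission
  imports Defs
begin

text \<open>Let N be the vertex-edge incidence matrix of X. Then Q = N N^T and A_L = N^T N - 2 I, so
the theorem is an instance of a fact about any pair of adjoint maps N, N^T: for \<lambda> \<noteq> 0, N^T maps
the \<lambda>-eigenspace of N N^T injectively into the \<lambda>-eigenspace of N^T N, and the two spectral
projections are intertwined, E_\<lambda> N = N F_\<lambda> and F_\<lambda> = N^T E_\<lambda> N / \<lambda>. Since
N f_ab = e_a + e_b, the first identity gives one direction of the equivalence and the second
the other.\<close>

definition subspace_on :: "'a set \<Rightarrow> ('a \<Rightarrow> real) set \<Rightarrow> bool" where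
  "subspace_on S W \<longleftrightarrow> W \<subseteq> vecs_on S \<and> (\<lambda>_. 0) \<in> W
     \<and> (\<forall>f\<in>W. \<forall>g\<in>W. (\<lambda>i. f i + g i) \<in> W) \<and> (\<forall>c. \<forall>f\<in>W. (\<lambda>i. c * f i) \<in> W)"

lemma subspace_on_add: "subspace_on S W \<Longrightarrow> f \<in> W \<Longrightarrow> g \<in> W \<Longrightarrow> (\<lambda>i. f i + g i) \<in> W"
  by (simp add: subspace_on_def)

lemma subspace_on_scale: "subspace_on S W \<Longrightarrow> f \<in> W \<Longrightarrow> (\<lambda>i. c * f i) \<in> W"
  by (simp add: subspace_on_def)

lemma subspace_on_diff_scale:
  assumes "subspace_on S W" "f \<in> W" "g \<in> W"
  shows "(\<lambda>i. f i - c * g i) \<in> W"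
  using subspace_on_add[OF assms(1,2) subspace_on_scale[OF assms(1,3), of "- c"]] by simp

lemma subspace_on_vanishes: "subspace_on S W \<Longrightarrow> f \<in> W \<Longrightarrow> x \<notin> S \<Longrightarrow> f x = 0"
  by (auto simp: subspace_on_def vecs_on_def)

lemma inner_on_diff_left: "inner_on S (\<lambda>i. f i - g i) h = inner_on S f h - inner_on S g h"
  by (simp add: inner_on_def left_diff_distrib sum_subtractf)

lemma inner_on_add_right: "inner_on S f (\<lambda>i. g i + h i) = inner_on S f g + inner_on S f h"
  by (simp add: inner_on_def distrib_left sum.distrib)

lemma inner_on_scale_left: "inner_on S (\<lambda>i. c * f i) g = c * inner_on S f g"
  by (simp add: inner_on_def sum_distrib_left mult.assoc)

lemma inner_on_scale_right: "inner_on S f (\<lambda>i. c * g i) = c * inner_on S f g"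
  by (simp add: inner_on_def sum_distrib_left mult.left_commute)

lemma inner_on_self_eq_0_iff: "finite S \<Longrightarrow> inner_on S f f = 0 \<longleftrightarrow> (\<forall>i\<in>S. f i = 0)"
  by (simp add: inner_on_def sum_nonneg_eq_0_iff)

definition is_orth_proj :: "'a set \<Rightarrow> ('a \<Rightarrow> real) set \<Rightarrow> ('a \<Rightarrow> real) \<Rightarrow> ('a \<Rightarrow> real) \<Rightarrow> bool" where
  "is_orth_proj S W v w \<longleftrightarrow> w \<in> W \<and> (\<forall>u\<in>W. inner_on S (\<lambda>i. v i - w i) u = 0)"

lemma is_orth_proj_unique:
  assumes S: "finite S" and W: "subspace_on S W"
    and w1: "is_orth_proj S W v w1" and w2: "is_orth_proj S W v w2"
  shows "w1 = w2"
proof -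
  define d where "d = (\<lambda>i. w1 i - w2 i)"
  have "d \<in> W"
    using subspace_on_diff_scale[OF W, of w1 w2 1] w1 w2 by (simp add: d_def is_orth_proj_def)
  have "inner_on S d d = inner_on S (\<lambda>i. v i - w2 i) d - inner_on S (\<lambda>i. v i - w1 i) d"
    unfolding d_def inner_on_def by (simp add: algebra_simps sum_subtractf[symmetric])
  also have "\<dots> = 0"
    using w1 w2 \<open>d \<in> W\<close> by (simp add: is_orth_proj_def)
  finally have "\<forall>i\<in>S. d i = 0"
    using inner_on_self_eq_0_iff[OF S] by simp
  moreover have "\<forall>i. i \<notin> S \<longrightarrow> d i = 0"
    using subspace_on_vanishes[OF W \<open>d \<in> W\<close>] by blast
  ultimately show ?thesis
    by (auto simp: d_def fun_eq_iff)
qed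

text \<open>The projection onto W is the projection onto W0 plus the component of the residual
along z.\<close>
lemma is_orth_proj_extend:
  assumes W: "subspace_on S W" and "W0 \<subseteq> W"
    and z: "z \<in> W" "inner_on S z z \<noteq> 0"
    and z_orth: "\<forall>u\<in>W0. inner_on S z u = 0"
    and decomp: "\<forall>u\<in>W. \<exists>t. (\<lambda>i. u i - t * z i) \<in> W0"
    and w0: "is_orth_proj S W0 v w0"
  shows "\<exists>w. is_orth_proj S W v w"
proof -
  define r where "r = (\<lambda>i. v i - w0 i)"
  define k where "k = inner_on S r z / inner_on S z z"
  have r_orth: "\<forall>u\<in>W0. inner_on S r u = 0"
    using w0 by (simp add: is_orth_proj_def r_def)
  have "(\<lambda>i. w0 i + k * z i) \<in> W"
    using subspace_on_add[OF W _ subspace_on_scale[OF W z(1)]] w0 \<open>W0 \<subseteq> W\<close>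
    by (auto simp: is_orth_proj_def)
  moreover have "inner_on S (\<lambda>i. v i - (w0 i + k * z i)) u = 0" if "u \<in> W" for u
  proof -
    obtain t where "(\<lambda>i. u i - t * z i) \<in> W0"
      using decomp \<open>u \<in> W\<close> by blast
    moreover define u0 where "u0 = (\<lambda>i. u i - t * z i)"
    ultimately have "u0 \<in> W0" by simp
    have "(\<lambda>i. v i - (w0 i + k * z i)) = (\<lambda>i. r i - k * z i)" and "u = (\<lambda>i. u0 i + t * z i)"
      by (simp_all add: r_def u0_def fun_eq_iff)
    then have "inner_on S (\<lambda>i. v i - (w0 i + k * z i)) u
        = inner_on S r u0 - k * inner_on S z u0 + t * (inner_on S r z - k * inner_on S z z)"
      by (simp add: inner_on_diff_left inner_on_add_right inner_on_scale_left
          inner_on_scale_right algebra_simps)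
    then show ?thesis
      using r_orth z_orth \<open>u0 \<in> W0\<close> z(2) by (simp add: k_def)
  qed
  ultimately show ?thesis
    unfolding is_orth_proj_def by blast
qed

text \<open>Induction on S: the vectors of W vanishing at the new index x form a subspace over the
smaller index set, and W is spanned by it together with one vector orthogonal to it.\<close>
lemma is_orth_proj_exists:
  assumes "finite S" "subspace_on S W"
  shows "\<exists>w. is_orth_proj S W v w"
  using assms
proof (induction S arbitrary: W v rule: finite_induct)
  case empty
  then have "is_orth_proj {} W v (\<lambda>_. 0)"
    by (simp add: is_orth_proj_def subspace_on_def inner_on_def)
  then show ?case by blast
next
  case (insert x T)
  define W0 where "W0 = {w \<in> W. w x = 0}"
  have "subspace_on T W0"
    using insert.prems by (auto simp: subspace_on_def W0_def vecs_on_def)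
  moreover have "inner_on (insert x T) f u = inner_on T f u" if "u \<in> W0" for f u
    using that insert.hyps by (simp add: W0_def inner_on_def)
  ultimately have proj_W0: "\<exists>w. is_orth_proj (insert x T) W0 v' w" for v'
    using insert.IH[of W0 v'] by (simp add: is_orth_proj_def)
  show ?case
  proof (cases "\<forall>w\<in>W. w x = 0")
    case True
    then have "W0 = W" by (auto simp: W0_def)
    then show ?thesis using proj_W0 by simp
  next
    case False
    then obtain z0 where z0: "z0 \<in> W" "z0 x \<noteq> 0" by blast
    obtain p where p: "is_orth_proj (insert x T) W0 z0 p"
      using proj_W0 by blast
    define z where "z = (\<lambda>i. z0 i - p i)"
    have "z \<in> W"
      using subspace_on_diff_scale[OF insert.prems z0(1), of p 1] p
      by (simp add: z_def is_orth_proj_def W0_def)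
    have "z x \<noteq> 0"
      using p z0(2) by (simp add: z_def is_orth_proj_def W0_def)
    then have z_nonzero: "inner_on (insert x T) z z \<noteq> 0"
      using insert.hyps inner_on_self_eq_0_iff by blast
    have z_orth: "\<forall>u\<in>W0. inner_on (insert x T) z u = 0"
      using p by (simp add: z_def is_orth_proj_def)
    have decomp: "\<forall>u\<in>W. \<exists>t. (\<lambda>i. u i - t * z i) \<in> W0"
    proof
      fix u assume "u \<in> W"
      have "(\<lambda>i. u i - (u x / z x) * z i) \<in> W"
        by (rule subspace_on_diff_scale[OF insert.prems \<open>u \<in> W\<close> \<open>z \<in> W\<close>])
      then have "(\<lambda>i. u i - (u x / z x) * z i) \<in> W0"
        using \<open>z x \<noteq> 0\<close> by (simp add: W0_def)
      then show "\<exists>t. (\<lambda>i. u i - t * z i) \<in> W0" ..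
    qed
    have "W0 \<subseteq> W"
      by (auto simp: W0_def)
    obtain w0 where "is_orth_proj (insert x T) W0 v w0"
      using proj_W0 by blast
    then show ?thesis
      by (rule is_orth_proj_extend[OF insert.prems \<open>W0 \<subseteq> W\<close> \<open>z \<in> W\<close> z_nonzero z_orth decomp])
  qed
qed

lemma orth_proj_eqI:
  assumes "finite S" "subspace_on S W" "is_orth_proj S W v w"
  shows "orth_proj S W v = w"
proof -
  have "(THE w. is_orth_proj S W v w) = w"
    using assms is_orth_proj_unique by (intro the_equality) blast+
  then show ?thesis
    by (simp add: orth_proj_def is_orth_proj_def)
qed

lemma is_orth_proj_orth_proj:
  "finite S \<Longrightarrow> subspace_on S W \<Longrightarrow> is_orth_proj S W v (orth_proj S W v)"
  using is_orth_proj_exists orth_proj_eqI by metis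

locale adjoint_pair =
  fixes S :: "'a set" and T :: "'b set"
    and N :: "('b \<Rightarrow> real) \<Rightarrow> 'a \<Rightarrow> real" and M :: "('a \<Rightarrow> real) \<Rightarrow> 'b \<Rightarrow> real"
  assumes finite_S: "finite S" and finite_T: "finite T"
    and N_vecs: "N f \<in> vecs_on S" and M_vecs: "M x \<in> vecs_on T"
    and N_add: "N (\<lambda>i. f i + g i) = (\<lambda>i. N f i + N g i)"
    and N_scale: "N (\<lambda>i. c * f i) = (\<lambda>i. c * N f i)"
    and M_add: "M (\<lambda>i. x i + y i) = (\<lambda>i. M x i + M y i)"
    and M_scale: "M (\<lambda>i. c * x i) = (\<lambda>i. c * M x i)"
    and adjoint: "inner_on S (N f) x = inner_on T f (M x)"
begin

definition eig_NM :: "real \<Rightarrow> ('a \<Rightarrow> real) set" where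
  "eig_NM \<theta> = {x \<in> vecs_on S. N (M x) = (\<lambda>i. \<theta> * x i)}"

definition eig_MN :: "real \<Rightarrow> ('b \<Rightarrow> real) set" where
  "eig_MN \<theta> = {f \<in> vecs_on T. M (N f) = (\<lambda>i. \<theta> * f i)}"

lemma N_zero: "N (\<lambda>_. 0) = (\<lambda>_. 0)"
  using N_scale[of 0] by simp

lemma M_zero: "M (\<lambda>_. 0) = (\<lambda>_. 0)"
  using M_scale[of 0] by simp

lemma N_diff: "N (\<lambda>i. f i - g i) = (\<lambda>i. N f i - N g i)"
  using N_add[of f "\<lambda>i. - 1 * g i"] N_scale[of "- 1" g] by simp

lemma subspace_on_eig_NM: "subspace_on S (eig_NM \<theta>)"
  by (auto simp: subspace_on_def eig_NM_def vecs_on_def M_add N_add M_scale N_scale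
      M_zero N_zero algebra_simps)

lemma subspace_on_eig_MN: "subspace_on T (eig_MN \<theta>)"
  by (auto simp: subspace_on_def eig_MN_def vecs_on_def M_add N_add M_scale N_scale
      M_zero N_zero algebra_simps)

lemma M_in_eig_MN: "x \<in> eig_NM \<theta> \<Longrightarrow> M x \<in> eig_MN \<theta>"
  by (simp add: eig_NM_def eig_MN_def M_vecs M_scale)

lemma N_in_eig_NM: "f \<in> eig_MN \<theta> \<Longrightarrow> N f \<in> eig_NM \<theta>"
  by (simp add: eig_NM_def eig_MN_def N_vecs N_scale)

lemma M_nonzero_on_eig_NM:
  assumes "\<theta> \<noteq> 0" "x \<in> eig_NM \<theta>" "x \<noteq> (\<lambda>_. 0)"
  shows "M x \<noteq> (\<lambda>_. 0)"
proof
  assume "M x = (\<lambda>_. 0)"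
  then have "(\<lambda>i. \<theta> * x i) = (\<lambda>_. 0)"
    using assms(2) by (simp add: eig_NM_def N_zero)
  then show False
    using assms(1,3) by (simp add: fun_eq_iff)
qed

lemma orth_proj_eig_NM_N:
  "orth_proj S (eig_NM \<theta>) (N p) = N (orth_proj T (eig_MN \<theta>) p)"
proof (rule orth_proj_eqI[OF finite_S subspace_on_eig_NM])
  define w where "w = orth_proj T (eig_MN \<theta>) p"
  have w: "is_orth_proj T (eig_MN \<theta>) p w"
    unfolding w_def by (rule is_orth_proj_orth_proj[OF finite_T subspace_on_eig_MN])
  have "inner_on S (\<lambda>i. N p i - N w i) u = 0" if "u \<in> eig_NM \<theta>" for u
    using w M_in_eig_MN[OF that] adjoint[of "\<lambda>i. p i - w i" u]
    by (simp add: is_orth_proj_def N_diff)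
  then show "is_orth_proj S (eig_NM \<theta>) (N p) (N w)"
    using w N_in_eig_NM by (simp add: is_orth_proj_def)
qed

lemma orth_proj_eig_MN_eq:
  assumes "\<theta> \<noteq> 0"
  shows "orth_proj T (eig_MN \<theta>) p = (\<lambda>i. M (orth_proj S (eig_NM \<theta>) (N p)) i / \<theta>)"
proof -
  define w where "w = orth_proj T (eig_MN \<theta>) p"
  have "w \<in> eig_MN \<theta>"
    using is_orth_proj_orth_proj[OF finite_T subspace_on_eig_MN]
    by (simp add: w_def is_orth_proj_def)
  then have "M (N w) = (\<lambda>i. \<theta> * w i)"
    by (simp add: eig_MN_def)
  then show ?thesis
    using assms by (simp add: orth_proj_eig_NM_N w_def[symmetric] fun_eq_iff)
qed

lemma orth_proj_eig_MN_eq_scaled_iff: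
  assumes "\<theta> \<noteq> 0"
  shows "orth_proj T (eig_MN \<theta>) p = (\<lambda>i. s * orth_proj T (eig_MN \<theta>) q i)
     \<longleftrightarrow> orth_proj S (eig_NM \<theta>) (N p) = (\<lambda>i. s * orth_proj S (eig_NM \<theta>) (N q) i)"
proof
  assume "orth_proj T (eig_MN \<theta>) p = (\<lambda>i. s * orth_proj T (eig_MN \<theta>) q i)"
  then show "orth_proj S (eig_NM \<theta>) (N p) = (\<lambda>i. s * orth_proj S (eig_NM \<theta>) (N q) i)"
    by (simp add: orth_proj_eig_NM_N N_scale)
next
  assume "orth_proj S (eig_NM \<theta>) (N p) = (\<lambda>i. s * orth_proj S (eig_NM \<theta>) (N q) i)"
  then show "orth_proj T (eig_MN \<theta>) p = (\<lambda>i. s * orth_proj T (eig_MN \<theta>) q i)"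
    using assms by (simp add: orth_proj_eig_MN_eq M_scale)
qed

end

lemma sum_sum_members_eq_sum_card:
  assumes "finite A" "finite U" "\<And>e. e \<in> A \<Longrightarrow> e \<subseteq> U"
  shows "(\<Sum>e\<in>A. \<Sum>u\<in>e. x u) = (\<Sum>u\<in>U. x u * real (card {e \<in> A. u \<in> e}))"
proof -
  have "(\<Sum>e\<in>A. \<Sum>u\<in>e. x u) = (\<Sum>e\<in>A. \<Sum>u\<in>{u \<in> U. u \<in> e}. x u)"
  proof (rule sum.cong[OF refl])
    show "(\<Sum>u\<in>e. x u) = (\<Sum>u\<in>{u \<in> U. u \<in> e}. x u)" if "e \<in> A" for e
      using assms(3)[OF that] by (simp add: Int_absorb1 Collect_conj_eq)
  qed
  also have "\<dots> = (\<Sum>u\<in>U. \<Sum>e\<in>{e \<in> A. u \<in> e}. x u)"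
    using assms(1,2) by (rule sum.swap_restrict)
  finally show ?thesis
    by (simp add: mult.commute)
qed

lemma simple_graph_edgeE:
  assumes "simple_graph V Ed" "e \<in> Ed"
  obtains x y where "x \<in> V" "y \<in> V" "x \<noteq> y" "e = {x, y}"
  using assms by (auto simp: simple_graph_def)

lemma simple_graph_edge_subset: "simple_graph V Ed \<Longrightarrow> e \<in> Ed \<Longrightarrow> e \<subseteq> V"
  by (metis simple_graph_edgeE empty_subsetI insert_subset)

lemma simple_graph_finite_edges: "simple_graph V Ed \<Longrightarrow> finite Ed"
  by (metis simple_graph_def simple_graph_edge_subset Pow_iff finite_Pow_iff rev_finite_subset subsetI)

lemma simple_graph_edge_eq:
  assumes "simple_graph V Ed" "e \<in> Ed" "u \<in> e" "v \<in> e" "u \<noteq> v"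
  shows "e = {u, v}"
  using assms by (elim simple_graph_edgeE) auto

definition incidence_apply :: "'v set \<Rightarrow> 'v set set \<Rightarrow> ('v set \<Rightarrow> real) \<Rightarrow> 'v \<Rightarrow> real" where
  "incidence_apply V Ed f = (\<lambda>v. if v \<in> V then (\<Sum>e\<in>{e \<in> Ed. v \<in> e}. f e) else 0)"

definition incidence_transpose_apply :: "'v set set \<Rightarrow> ('v \<Rightarrow> real) \<Rightarrow> 'v set \<Rightarrow> real" where
  "incidence_transpose_apply Ed x = (\<lambda>e. if e \<in> Ed then (\<Sum>v\<in>e. x v) else 0)"

lemma inner_on_incidence_apply:
  assumes "simple_graph V Ed"
  shows "inner_on V (incidence_apply V Ed f) x = inner_on Ed f (incidence_transpose_apply Ed x)"
proof -
  have "inner_on V (incidence_apply V Ed f) x = (\<Sum>v\<in>V. \<Sum>e\<in>{e \<in> Ed. v \<in> e}. f e * x v)"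
    by (simp add: inner_on_def incidence_apply_def sum_distrib_right)
  also have "\<dots> = (\<Sum>e\<in>Ed. \<Sum>v\<in>{v \<in> V. v \<in> e}. f e * x v)"
    using assms simple_graph_finite_edges by (intro sum.swap_restrict) (auto simp: simple_graph_def)
  also have "\<dots> = (\<Sum>e\<in>Ed. \<Sum>v\<in>e. f e * x v)"
  proof (rule sum.cong[OF refl])
    show "(\<Sum>v\<in>{v \<in> V. v \<in> e}. f e * x v) = (\<Sum>v\<in>e. f e * x v)" if "e \<in> Ed" for e
      using simple_graph_edge_subset[OF assms that] by (simp add: Int_absorb1 Collect_conj_eq)
  qed
  also have "\<dots> = inner_on Ed f (incidence_transpose_apply Ed x)"
    by (simp add: inner_on_def incidence_transpose_apply_def sum_distrib_left)
  finally show ?thesis .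
qed

lemma adjoint_pair_incidence:
  assumes "simple_graph V Ed"
  shows "adjoint_pair V Ed (incidence_apply V Ed) (incidence_transpose_apply Ed)"
proof
  show "finite V"
    using assms by (simp add: simple_graph_def)
  show "finite Ed"
    using assms by (rule simple_graph_finite_edges)
  show "inner_on V (incidence_apply V Ed f) x = inner_on Ed f (incidence_transpose_apply Ed x)" for f x
    using assms by (rule inner_on_incidence_apply)
qed (auto simp: vecs_on_def incidence_apply_def incidence_transpose_apply_def sum.distrib
    sum_distrib_left fun_eq_iff)

lemma card_edges_containing_both:
  assumes "simple_graph V Ed" "u \<noteq> v"
  shows "card {e \<in> Ed. v \<in> e \<and> u \<in> e} = (if {v, u} \<in> Ed then 1 else 0)"
proof -
  have edge: "e = {v, u}" if "e \<in> Ed" "v \<in> e" "u \<in> e" for e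
    using simple_graph_edge_eq[OF assms(1) that] assms(2) by simp
  have "{e \<in> Ed. v \<in> e \<and> u \<in> e} = (if {v, u} \<in> Ed then {{v, u}} else {})"
    by (auto dest: edge)
  then show ?thesis
    by simp
qed

lemma mat_vec_signless_laplacian:
  assumes "simple_graph V Ed"
  shows "mat_vec V (signless_laplacian Ed) x = incidence_apply V Ed (incidence_transpose_apply Ed x)"
proof
  fix v
  show "mat_vec V (signless_laplacian Ed) x v = incidence_apply V Ed (incidence_transpose_apply Ed x) v"
  proof (cases "v \<in> V")
    case True
    have "incidence_apply V Ed (incidence_transpose_apply Ed x) v = (\<Sum>e\<in>{e \<in> Ed. v \<in> e}. \<Sum>u\<in>e. x u)"
      using True by (simp add: incidence_apply_def incidence_transpose_apply_def)
    also have "\<dots> = (\<Sum>u\<in>V. x u * real (card {e \<in> {e \<in> Ed. v \<in> e}. u \<in> e}))"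
      using assms simple_graph_finite_edges[OF assms] simple_graph_edge_subset[OF assms]
      by (intro sum_sum_members_eq_sum_card) (auto simp: simple_graph_def)
    also have "\<dots> = (\<Sum>u\<in>V. signless_laplacian Ed v u * x u)"
    proof (rule sum.cong[OF refl])
      show "x u * real (card {e \<in> {e \<in> Ed. v \<in> e}. u \<in> e}) = signless_laplacian Ed v u * x u" for u
        using card_edges_containing_both[OF assms, of u v]
        by (cases "u = v") (simp_all add: signless_laplacian_def degree_def)
    qed
    finally show ?thesis
      using True by (simp add: mat_vec_def)
  qed (simp add: mat_vec_def incidence_apply_def)
qed

lemma card_inter_edges:
  assumes "simple_graph V Ed" "e \<in> Ed" "e' \<in> Ed"
  shows "real (card (e \<inter> e')) = line_adj Ed e e' + (if e' = e then 2 else 0)"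
proof (cases "e' = e")
  case True
  then show ?thesis
    using assms(1,2) by (elim simple_graph_edgeE) (auto simp: line_adj_def)
next
  case False
  have "finite (e \<inter> e')"
    using assms(1,2) by (elim simple_graph_edgeE) auto
  moreover have "\<forall>y\<in>e \<inter> e'. \<forall>z\<in>e \<inter> e'. y = z"
    using simple_graph_edge_eq[OF assms(1)] assms(2,3) False by (metis IntE)
  ultimately have "card (e \<inter> e') \<le> 1"
    by (simp add: card_le_Suc0_iff_eq)
  moreover have "0 < card (e \<inter> e') \<longleftrightarrow> e \<inter> e' \<noteq> {}"
    using \<open>finite (e \<inter> e')\<close> by (simp add: card_gt_0_iff)
  ultimately show ?thesis
    using False by (auto simp: line_adj_def)
qed

lemma mat_vec_line_adj:
  assumes "simple_graph V Ed" "f \<in> vecs_on Ed"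
  shows "mat_vec Ed (line_adj Ed) f
    = (\<lambda>e. incidence_transpose_apply Ed (incidence_apply V Ed f) e - 2 * f e)"
proof
  fix e
  show "mat_vec Ed (line_adj Ed) f e = incidence_transpose_apply Ed (incidence_apply V Ed f) e - 2 * f e"
  proof (cases "e \<in> Ed")
    case True
    have "finite e"
      using assms(1) True by (elim simple_graph_edgeE) auto
    have "incidence_transpose_apply Ed (incidence_apply V Ed f) e
        = (\<Sum>v\<in>e. \<Sum>e'\<in>{e' \<in> Ed. v \<in> e'}. f e')"
      using True simple_graph_edge_subset[OF assms(1) True]
      by (simp add: incidence_transpose_apply_def incidence_apply_def subset_iff)
    also have "\<dots> = (\<Sum>e'\<in>Ed. \<Sum>v\<in>{v \<in> e. v \<in> e'}. f e')"
      using \<open>finite e\<close> simple_graph_finite_edges[OF assms(1)] by (rule sum.swap_restrict)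
    also have "\<dots> = (\<Sum>e'\<in>Ed. line_adj Ed e e' * f e' + (if e' = e then 2 * f e else 0))"
    proof (rule sum.cong[OF refl])
      show "(\<Sum>v\<in>{v \<in> e. v \<in> e'}. f e') = line_adj Ed e e' * f e' + (if e' = e then 2 * f e else 0)"
        if "e' \<in> Ed" for e'
        using card_inter_edges[OF assms(1) True that] by (simp add: Int_def algebra_simps)
    qed
    also have "\<dots> = (\<Sum>e'\<in>Ed. line_adj Ed e e' * f e') + 2 * f e"
      using True simple_graph_finite_edges[OF assms(1)] by (simp add: sum.distrib)
    finally show ?thesis
      using True by (simp add: mat_vec_def)
  next
    case False
    then show ?thesis
      using assms(2) by (simp add: mat_vec_def incidence_transpose_apply_def vecs_on_def)
  qed
qed

lemma eigenspace_on_signless_laplacian: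
  assumes "simple_graph V Ed"
  shows "eigenspace_on V (signless_laplacian Ed) \<theta>
    = adjoint_pair.eig_NM V (incidence_apply V Ed) (incidence_transpose_apply Ed) \<theta>"
  using adjoint_pair.eig_NM_def[OF adjoint_pair_incidence[OF assms]]
  by (simp add: eigenspace_on_def mat_vec_signless_laplacian[OF assms])

lemma eigenspace_on_line_adj:
  assumes "simple_graph V Ed"
  shows "eigenspace_on Ed (line_adj Ed) (\<theta> - 2)
    = adjoint_pair.eig_MN Ed (incidence_apply V Ed) (incidence_transpose_apply Ed) \<theta>"
  using adjoint_pair.eig_MN_def[OF adjoint_pair_incidence[OF assms]]
  by (auto simp: eigenspace_on_def mat_vec_line_adj[OF assms] fun_eq_iff algebra_simps)

lemma incidence_apply_std_basis:
  assumes "simple_graph V Ed" "{a, b} \<in> Ed"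
  shows "incidence_apply V Ed (std_basis {a, b}) = (\<lambda>i. std_basis a i + std_basis b i)"
proof
  fix v
  obtain x y where "x \<in> V" "y \<in> V" "x \<noteq> y" "{a, b} = {x, y}"
    using assms by (rule simple_graph_edgeE)
  then have "a \<noteq> b" "a \<in> V" "b \<in> V"
    by (auto simp: doubleton_eq_iff)
  moreover have "(\<Sum>e\<in>{e \<in> Ed. v \<in> e}. std_basis {a, b} e) = (if {a, b} \<in> {e \<in> Ed. v \<in> e} then 1 else 0)"
    using simple_graph_finite_edges[OF assms(1)] by (simp add: std_basis_def sum.delta')
  ultimately show "incidence_apply V Ed (std_basis {a, b}) v = std_basis a v + std_basis b v"
    using assms(2) by (auto simp: incidence_apply_def std_basis_def)
qed

theorem mainTheorem12:
  fixes V :: "'v set" and Ed :: "'v set set" and a b \<alpha> \<beta> :: 'v and lam :: real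
  assumes "simple_graph V Ed"
    and "{a, b} \<in> Ed" and "{\<alpha>, \<beta>} \<in> Ed"
    and "is_eigenvalue_on V (signless_laplacian Ed) lam" and "lam \<noteq> 0"
  shows "is_eigenvalue_on Ed (line_adj Ed) (lam - 2) \<and>
    (\<forall>s \<in> {1, -1 :: real}.
      (spectral_proj Ed (line_adj Ed) (lam - 2) (std_basis {a, b})
         = (\<lambda>i. s * spectral_proj Ed (line_adj Ed) (lam - 2) (std_basis {\<alpha>, \<beta>}) i))
      \<longleftrightarrow>
      (spectral_proj V (signless_laplacian Ed) lam (\<lambda>i. std_basis a i + std_basis b i)
         = (\<lambda>i. s * spectral_proj V (signless_laplacian Ed) lam (\<lambda>i. std_basis \<alpha> i + std_basis \<beta> i) i)))"
proof -
  interpret inc: adjoint_pair V Ed "incidence_apply V Ed" "incidence_transpose_apply Ed"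
    using assms(1) by (rule adjoint_pair_incidence)
  note E = eigenspace_on_signless_laplacian[OF assms(1)]
  note F = eigenspace_on_line_adj[OF assms(1)]
  obtain x where "x \<in> inc.eig_NM lam" "x \<noteq> (\<lambda>_. 0)"
    using assms(4) by (auto simp: is_eigenvalue_on_def E)
  then have "is_eigenvalue_on Ed (line_adj Ed) (lam - 2)"
    using inc.M_in_eig_MN inc.M_nonzero_on_eig_NM[OF assms(5)] by (auto simp: is_eigenvalue_on_def F)
  moreover have "spectral_proj Ed (line_adj Ed) (lam - 2) (std_basis {a, b})
         = (\<lambda>i. s * spectral_proj Ed (line_adj Ed) (lam - 2) (std_basis {\<alpha>, \<beta>}) i)
      \<longleftrightarrow>
      spectral_proj V (signless_laplacian Ed) lam (\<lambda>i. std_basis a i + std_basis b i)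
         = (\<lambda>i. s * spectral_proj V (signless_laplacian Ed) lam (\<lambda>i. std_basis \<alpha> i + std_basis \<beta> i) i)"
    for s
    using inc.orth_proj_eig_MN_eq_scaled_iff[OF assms(5), of "std_basis {a, b}" s "std_basis {\<alpha>, \<beta>}"]
    by (simp add: spectral_proj_def E F incidence_apply_std_basis[OF assms(1,2)]
        incidence_apply_std_basis[OF assms(1,3)])
  ultimately show ?thesis
    by blast
qed

end
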